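(* Suppose the rewards are $R_{\mathcal{T}}(s)=\langle f(\mathcal{T}),W_Rs\rangle$ for a function $f:\mathcal{C}^n\to\mathbb{R}^d$ which, for each $i\in\{1,\dots,n\}$, is $L_i$-Lipschitz in the capability $\mathcal{T}_i$ of agent $i$ (other capabilities fixed) with respect to $|\cdot|_\infty$ on both domain and codomain, while the transition dynamics do not depend on the capabilities. Let $s_{max}=\max_{s\in S}\|W_Rs\|_1$. Then for any two team compositions $\mathcal{T}^x,\mathcal{T}^y\in\mathcal{C}^n$, $$|V^*_{\mathcal{T}^x}-V^*_{\mathcal{T}^y}|\le\frac{s_{max}\sum_{i=1}^nL_i|\mathcal{T}^x_i-\mathcal{T}^y_i|_\infty}{\gamma(1-\gamma)}.$$
   Context: Setting. $S\subset[0,1]^k$ is a finite set of states (each state identified with its feature vector), $U$ is a finite individual action set, there are $n$ agents with joint action set $U^n$, $\rho$ is an initial state distribution on $S$ and $\gamma\in(0,1)$ is the discount factor. Capability vectors lie in $\mathcal{C}\subseteq\Delta_{d-1}$, the probability simplex in $\mathbb{R}^d$; a team composition is $\mathcal{T}=(\mathcal{T}_1,\dots,\mathcal{T}_n)\in\mathcal{C}^n$. $W_R\in\mathbb{R}^{d\times k}$ is a fixed matrix and $P(s'|s,\mathbf{u})$ is a fixed transition kernel common to all team compositions. Team composition $\mathcal{T}$ defines the MMDP with reward $R_{\mathcal{T}}$ and transitions $P$; $V^*_{\mathcal{T}}(s)$ is its optimal expected discounted return from $s$ and $V^*_{\mathcal{T}}=\mathbb{E}_{s_0\sim\rho}V^*_{\mathcal{T}}(s_0)$.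 $|\cdot|_\infty$, $\|\cdot\|_1$ are the sup and $\ell_1$ norms. *)

theory Defs
  imports "HOL-Analysis.Analysis"
begin

text \<open>States are feature vectors in real^'k, agents are indexed by the finite type 'n,
  individual actions by the finite type 'u (so U = UNIV), joint actions are 'n \<Rightarrow> 'u.\<close>

definition prob_simplex :: "(real^'d) set" where
  "prob_simplex = {c. (\<forall>i. 0 \<le> c $ i) \<and> (\<Sum>i\<in>UNIV. c $ i) = 1}"

definition l1norm :: "real^'d \<Rightarrow> real" where
  "l1norm x = (\<Sum>i\<in>UNIV. \<bar>x $ i\<bar>)"

text \<open>Expected discounted return over the first N steps of a (deterministic, history-dependent)
  policy pi, started from history h; reward R is collected at every visited state.\<close>
fun ret_h :: "('s \<Rightarrow> real) \<Rightarrow> ('s \<Rightarrow> 'a \<Rightarrow> 's \<Rightarrow> real) \<Rightarrow> 's set \<Rightarrow> real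
      \<Rightarrow> ('s list \<Rightarrow> 'a) \<Rightarrow> nat \<Rightarrow> 's list \<Rightarrow> real" where
  "ret_h R P S \<gamma> pol 0 h = 0"
| "ret_h R P S \<gamma> pol (Suc N) h =
     R (last h) + \<gamma> * (\<Sum>s'\<in>S. P (last h) (pol h) s' * ret_h R P S \<gamma> pol N (h @ [s']))"

definition policy_value :: "('s \<Rightarrow> real) \<Rightarrow> ('s \<Rightarrow> 'a \<Rightarrow> 's \<Rightarrow> real) \<Rightarrow> 's set \<Rightarrow> real
      \<Rightarrow> ('s list \<Rightarrow> 'a) \<Rightarrow> 's \<Rightarrow> real" where
  "policy_value R P S \<gamma> pol s = lim (\<lambda>N. ret_h R P S \<gamma> pol N [s])"

definition opt_value_state :: "('s \<Rightarrow> real) \<Rightarrow> ('s \<Rightarrow> 'a \<Rightarrow> 's \<Rightarrow> real) \<Rightarrow> 's set \<Rightarrow> real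
      \<Rightarrow> 's \<Rightarrow> real" where
  "opt_value_state R P S \<gamma> s = (SUP pol. policy_value R P S \<gamma> pol s)"

definition opt_value :: "('s \<Rightarrow> real) \<Rightarrow> ('s \<Rightarrow> 'a \<Rightarrow> 's \<Rightarrow> real) \<Rightarrow> 's set \<Rightarrow> real
      \<Rightarrow> ('s \<Rightarrow> real) \<Rightarrow> real" where
  "opt_value R P S \<gamma> \<rho> = (\<Sum>s\<in>S. \<rho> s * opt_value_state R P S \<gamma> s)"

definition team_reward :: "(('n \<Rightarrow> real^'d) \<Rightarrow> real^'d) \<Rightarrow> real^'k^'d \<Rightarrow> ('n \<Rightarrow> real^'d)
      \<Rightarrow> real^'k \<Rightarrow> real" where
  "team_reward f W T s = f T \<bullet> (W *v s)"

end

theory Submission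
  imports Defs
begin

text \<open>Changing the capabilities one agent at a time, the Lipschitz hypothesis bounds
  \<open>|f(T\<^sup>x) - f(T\<^sup>y)|\<^sub>\<infinity>\<close> by \<open>\<Sum>\<^sub>i L\<^sub>i |T\<^sup>x\<^sub>i - T\<^sup>y\<^sub>i|\<^sub>\<infinity>\<close>, and by Hoelder's inequality the two reward
  functions then differ by at most \<open>\<delta> = s\<^sub>m\<^sub>a\<^sub>x \<Sum>\<^sub>i L\<^sub>i |T\<^sup>x\<^sub>i - T\<^sup>y\<^sub>i|\<^sub>\<infinity>\<close> at every state.
  Since both MDPs share the transition kernel, the finite-horizon returns of any fixed policy
  differ by at most \<open>\<delta> + \<gamma> \<delta> + \<gamma>\<^sup>2 \<delta> + \<dots> \<le> \<delta> / (1 - \<gamma>)\<close>; this bound passes to the limit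
  (the policy values), to the supremum over policies (the optimal values) and to the average
  over the initial distribution. The claimed bound, with the extra factor \<open>1/\<gamma> \<ge> 1\<close>, is weaker.\<close>

lemma abs_weighted_sum_le:
  fixes w x :: "'a \<Rightarrow> real"
  assumes "\<And>a. a \<in> A \<Longrightarrow> 0 \<le> w a" and "sum w A = 1" and "\<And>a. a \<in> A \<Longrightarrow> \<bar>x a\<bar> \<le> B"
  shows "\<bar>\<Sum>a\<in>A. w a * x a\<bar> \<le> B"
proof -
  have "\<bar>\<Sum>a\<in>A. w a * x a\<bar> \<le> (\<Sum>a\<in>A. w a * B)"
    by (rule order_trans[OF sum_abs sum_mono]) (simp add: assms abs_mult mult_left_mono)
  also have "\<dots> = B"
    using assms(2) by (simp add: sum_distrib_right[symmetric])
  finally show ?thesis .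
qed

lemma convergent_if_geometric_increments:
  fixes a :: "nat \<Rightarrow> real"
  assumes "\<And>n. \<bar>a (Suc n) - a n\<bar> \<le> M * g ^ n" and "0 \<le> g" and "g < 1"
  shows "convergent a"
proof -
  have "summable (\<lambda>n. a (Suc n) - a n)"
    by (rule summable_comparison_test'[of "\<lambda>n. M * g ^ n" 0])
       (use assms in \<open>auto simp: summable_geometric\<close>)
  then have "convergent (\<lambda>n. a n - a 0)"
    by (simp add: summable_iff_convergent sum_lessThan_telescope)
  then show ?thesis
    by (simp add: convergent_diff_const_right_iff)
qed

lemma ret_h_zero_reward: "ret_h (\<lambda>_. 0) P S \<gamma> pol N h = 0"
  by (induction N arbitrary: h) auto

locale finite_mdp =
  fixes S :: "'s set" and P :: "'s \<Rightarrow> 'a \<Rightarrow> 's \<Rightarrow> real" and \<gamma> :: real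
  assumes finite_states: "finite S"
    and transition_nonneg: "\<And>s u s'. s \<in> S \<Longrightarrow> s' \<in> S \<Longrightarrow> 0 \<le> P s u s'"
    and transition_sum: "\<And>s u. s \<in> S \<Longrightarrow> (\<Sum>s'\<in>S. P s u s') = 1"
    and discount_nonneg: "0 \<le> \<gamma>"
    and discount_less_one: "\<gamma> < 1"
begin

lemma abs_expectation_le:
  assumes "s \<in> S" and "\<And>s'. s' \<in> S \<Longrightarrow> \<bar>x s'\<bar> \<le> B"
  shows "\<bar>\<Sum>s'\<in>S. P s u s' * x s'\<bar> \<le> B"
  using assms by (intro abs_weighted_sum_le) (auto simp: transition_nonneg transition_sum)

lemma abs_discounted_expectation_le:
  assumes "s \<in> S" and "\<And>s'. s' \<in> S \<Longrightarrow> \<bar>x s'\<bar> \<le> B"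
  shows "\<bar>\<gamma> * (\<Sum>s'\<in>S. P s u s' * x s')\<bar> \<le> \<gamma> * B"
  using mult_left_mono[OF abs_expectation_le[OF assms] discount_nonneg]
  by (simp only: abs_mult abs_of_nonneg[OF discount_nonneg])

lemma ret_h_Suc_diff_le:
  assumes "\<And>s. s \<in> S \<Longrightarrow> \<bar>R s\<bar> \<le> M" and "last h \<in> S"
  shows "\<bar>ret_h R P S \<gamma> pol (Suc N) h - ret_h R P S \<gamma> pol N h\<bar> \<le> M * \<gamma> ^ N"
  using assms(2)
proof (induction N arbitrary: h)
  case 0
  then show ?case using assms(1) by simp
next
  case (Suc N)
  let ?d = "\<lambda>s'. ret_h R P S \<gamma> pol (Suc N) (h @ [s']) - ret_h R P S \<gamma> pol N (h @ [s'])"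
  have "\<bar>\<gamma> * (\<Sum>s'\<in>S. P (last h) (pol h) s' * ?d s')\<bar> \<le> \<gamma> * (M * \<gamma> ^ N)"
    using Suc.prems by (intro abs_discounted_expectation_le Suc.IH) auto
  then show ?case
    by (simp add: right_diff_distrib sum_subtractf mult_ac)
qed

lemma ret_h_diff_le:
  assumes "\<And>s. s \<in> S \<Longrightarrow> \<bar>R\<^sub>1 s - R\<^sub>2 s\<bar> \<le> \<delta>" and "last h \<in> S"
  shows "\<bar>ret_h R\<^sub>1 P S \<gamma> pol N h - ret_h R\<^sub>2 P S \<gamma> pol N h\<bar> \<le> \<delta> / (1 - \<gamma>)"
  using assms(2)
proof (induction N arbitrary: h)
  case 0
  have "0 \<le> \<delta>"
    using assms(1)[OF 0] by linarith
  then show ?case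
    using discount_less_one by simp
next
  case (Suc N)
  let ?d = "\<lambda>s'. ret_h R\<^sub>1 P S \<gamma> pol N (h @ [s']) - ret_h R\<^sub>2 P S \<gamma> pol N (h @ [s'])"
  have "\<bar>\<gamma> * (\<Sum>s'\<in>S. P (last h) (pol h) s' * ?d s')\<bar> \<le> \<gamma> * (\<delta> / (1 - \<gamma>))"
    using Suc.prems by (intro abs_discounted_expectation_le Suc.IH) auto
  moreover have "\<bar>R\<^sub>1 (last h) - R\<^sub>2 (last h)\<bar> \<le> \<delta>"
    using assms(1) Suc.prems by blast
  ultimately have "\<bar>ret_h R\<^sub>1 P S \<gamma> pol (Suc N) h - ret_h R\<^sub>2 P S \<gamma> pol (Suc N) h\<bar>
      \<le> \<delta> + \<gamma> * (\<delta> / (1 - \<gamma>))"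
    by (simp add: right_diff_distrib sum_subtractf abs_le_iff)
  also have "\<dots> = \<delta> / (1 - \<gamma>)"
    using discount_less_one by (simp add: field_simps)
  finally show ?case .
qed

lemma ret_h_tendsto_policy_value:
  assumes "s \<in> S"
  shows "(\<lambda>N. ret_h R P S \<gamma> pol N [s]) \<longlonglongrightarrow> policy_value R P S \<gamma> pol s"
proof -
  define M where "M = Max ((\<lambda>s. \<bar>R s\<bar>) ` S)"
  have "\<And>s. s \<in> S \<Longrightarrow> \<bar>R s\<bar> \<le> M"
    using finite_states by (simp add: M_def)
  then have "\<bar>ret_h R P S \<gamma> pol (Suc N) [s] - ret_h R P S \<gamma> pol N [s]\<bar> \<le> M * \<gamma> ^ N" for N
    using assms by (intro ret_h_Suc_diff_le) simp_all
  then have "convergent (\<lambda>N. ret_h R P S \<gamma> pol N [s])"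
    using discount_nonneg discount_less_one by (rule convergent_if_geometric_increments)
  then show ?thesis
    unfolding policy_value_def by (simp add: convergent_LIMSEQ_iff)
qed

lemma policy_value_diff_le:
  assumes "\<And>s. s \<in> S \<Longrightarrow> \<bar>R\<^sub>1 s - R\<^sub>2 s\<bar> \<le> \<delta>" and "s \<in> S"
  shows "\<bar>policy_value R\<^sub>1 P S \<gamma> pol s - policy_value R\<^sub>2 P S \<gamma> pol s\<bar> \<le> \<delta> / (1 - \<gamma>)"
proof (rule LIMSEQ_le_const2)
  show "(\<lambda>N. \<bar>ret_h R\<^sub>1 P S \<gamma> pol N [s] - ret_h R\<^sub>2 P S \<gamma> pol N [s]\<bar>)
      \<longlonglongrightarrow> \<bar>policy_value R\<^sub>1 P S \<gamma> pol s - policy_value R\<^sub>2 P S \<gamma> pol s\<bar>"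
    by (intro tendsto_rabs tendsto_diff ret_h_tendsto_policy_value assms(2))
  show "\<exists>N\<^sub>0. \<forall>N\<ge>N\<^sub>0. \<bar>ret_h R\<^sub>1 P S \<gamma> pol N [s] - ret_h R\<^sub>2 P S \<gamma> pol N [s]\<bar> \<le> \<delta> / (1 - \<gamma>)"
    using ret_h_diff_le[OF assms(1)] assms(2) by auto
qed

lemma bdd_above_policy_values:
  assumes "s \<in> S"
  shows "bdd_above (range (\<lambda>pol. policy_value R P S \<gamma> pol s))"
proof -
  define M where "M = Max ((\<lambda>s. \<bar>R s\<bar>) ` S)"
  have "\<And>s. s \<in> S \<Longrightarrow> \<bar>R s - 0\<bar> \<le> M"
    using finite_states by (simp add: M_def)
  from policy_value_diff_le[of R "\<lambda>_. 0", OF this assms]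
  have "policy_value R P S \<gamma> pol s \<le> M / (1 - \<gamma>)" for pol
    by (simp add: policy_value_def ret_h_zero_reward abs_le_iff)
  then show ?thesis
    by (rule bdd_aboveI2)
qed

lemma opt_value_state_le:
  assumes "\<And>s. s \<in> S \<Longrightarrow> \<bar>R\<^sub>1 s - R\<^sub>2 s\<bar> \<le> \<delta>" and "s \<in> S"
  shows "opt_value_state R\<^sub>1 P S \<gamma> s \<le> opt_value_state R\<^sub>2 P S \<gamma> s + \<delta> / (1 - \<gamma>)"
  unfolding opt_value_state_def
proof (rule cSUP_least)
  fix pol
  have "policy_value R\<^sub>1 P S \<gamma> pol s \<le> policy_value R\<^sub>2 P S \<gamma> pol s + \<delta> / (1 - \<gamma>)"
    using policy_value_diff_le[of R\<^sub>1 R\<^sub>2 \<delta>, OF assms, where pol = pol] by (simp add: abs_le_iff)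
  also have "\<dots> \<le> (SUP pol. policy_value R\<^sub>2 P S \<gamma> pol s) + \<delta> / (1 - \<gamma>)"
    using cSUP_upper[OF _ bdd_above_policy_values[OF assms(2)]] by simp
  finally show "policy_value R\<^sub>1 P S \<gamma> pol s \<le> (SUP pol. policy_value R\<^sub>2 P S \<gamma> pol s) + \<delta> / (1 - \<gamma>)" .
qed simp

lemma opt_value_state_diff_le:
  assumes "\<And>s. s \<in> S \<Longrightarrow> \<bar>R\<^sub>1 s - R\<^sub>2 s\<bar> \<le> \<delta>" and "s \<in> S"
  shows "\<bar>opt_value_state R\<^sub>1 P S \<gamma> s - opt_value_state R\<^sub>2 P S \<gamma> s\<bar> \<le> \<delta> / (1 - \<gamma>)"
proof -
  have "\<And>s. s \<in> S \<Longrightarrow> \<bar>R\<^sub>2 s - R\<^sub>1 s\<bar> \<le> \<delta>"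
    using assms(1) by (simp add: abs_minus_commute)
  from opt_value_state_le[of R\<^sub>2 R\<^sub>1 \<delta>, OF this assms(2)]
  show ?thesis
    using opt_value_state_le[of R\<^sub>1 R\<^sub>2 \<delta>, OF assms] by (simp add: abs_le_iff)
qed

lemma opt_value_diff_le:
  assumes "\<And>s. s \<in> S \<Longrightarrow> \<bar>R\<^sub>1 s - R\<^sub>2 s\<bar> \<le> \<delta>"
    and "\<And>s. s \<in> S \<Longrightarrow> 0 \<le> \<rho> s" and "(\<Sum>s\<in>S. \<rho> s) = 1"
  shows "\<bar>opt_value R\<^sub>1 P S \<gamma> \<rho> - opt_value R\<^sub>2 P S \<gamma> \<rho>\<bar> \<le> \<delta> / (1 - \<gamma>)"
proof -
  have "opt_value R\<^sub>1 P S \<gamma> \<rho> - opt_value R\<^sub>2 P S \<gamma> \<rho>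
      = (\<Sum>s\<in>S. \<rho> s * (opt_value_state R\<^sub>1 P S \<gamma> s - opt_value_state R\<^sub>2 P S \<gamma> s))"
    by (simp add: opt_value_def right_diff_distrib sum_subtractf)
  then show ?thesis
    using assms by (simp add: abs_weighted_sum_le opt_value_state_diff_le)
qed

end

lemma abs_inner_le_infnorm_l1norm:
  fixes x v :: "real^'d"
  shows "\<bar>x \<bullet> v\<bar> \<le> infnorm x * l1norm v"
proof -
  have "\<bar>x \<bullet> v\<bar> \<le> (\<Sum>i\<in>UNIV. \<bar>x $ i\<bar> * \<bar>v $ i\<bar>)"
    unfolding inner_vec_def by (rule order_trans[OF sum_abs]) (simp add: abs_mult)
  also have "\<dots> \<le> (\<Sum>i\<in>UNIV. infnorm x * \<bar>v $ i\<bar>)"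
    by (intro sum_mono mult_right_mono component_le_infnorm_cart) simp
  also have "\<dots> = infnorm x * l1norm v"
    by (simp add: l1norm_def sum_distrib_left)
  finally show ?thesis .
qed

lemma l1norm_nonneg: "0 \<le> l1norm x"
  by (simp add: l1norm_def sum_nonneg)

lemma abs_team_reward_diff_le:
  "\<bar>team_reward f W T\<^sub>1 s - team_reward f W T\<^sub>2 s\<bar> \<le> infnorm (f T\<^sub>1 - f T\<^sub>2) * l1norm (W *v s)"
  unfolding team_reward_def inner_diff_left[symmetric] by (rule abs_inner_le_infnorm_l1norm)

lemma infnorm_diff_le_sum_Lipschitz:
  fixes f :: "('n::finite \<Rightarrow> 'a::euclidean_space) \<Rightarrow> 'b::euclidean_space"
  assumes lipschitz: "\<And>T i c. (\<And>j. T j \<in> C) \<Longrightarrow> c \<in> C \<Longrightarrow>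
      infnorm (f (T(i := c)) - f T) \<le> L i * infnorm (c - T i)"
    and "\<And>i. T\<^sub>1 i \<in> C" and "\<And>i. T\<^sub>2 i \<in> C"
  shows "infnorm (f T\<^sub>1 - f T\<^sub>2) \<le> (\<Sum>i\<in>UNIV. L i * infnorm (T\<^sub>1 i - T\<^sub>2 i))"
proof -
  define hybrid where "hybrid B = (\<lambda>i. if i \<in> B then T\<^sub>1 i else T\<^sub>2 i)" for B
  have "infnorm (f (hybrid B) - f T\<^sub>2) \<le> (\<Sum>i\<in>B. L i * infnorm (T\<^sub>1 i - T\<^sub>2 i))" for B
    using finite[of B]
  proof (induction B rule: finite_induct)
    case empty
    then show ?case by (simp add: hybrid_def infnorm_0)
  next
    case (insert a B)
    have "hybrid (insert a B) = (hybrid B)(a := T\<^sub>1 a)" and "hybrid B a = T\<^sub>2 a"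
      using insert.hyps by (auto simp: hybrid_def)
    then have "infnorm (f (hybrid (insert a B)) - f (hybrid B)) \<le> L a * infnorm (T\<^sub>1 a - T\<^sub>2 a)"
      using lipschitz assms(2,3) by (metis hybrid_def)
    then have "infnorm (f (hybrid (insert a B)) - f T\<^sub>2)
        \<le> L a * infnorm (T\<^sub>1 a - T\<^sub>2 a) + infnorm (f (hybrid B) - f T\<^sub>2)"
      using infnorm_triangle[of "f (hybrid (insert a B)) - f (hybrid B)" "f (hybrid B) - f T\<^sub>2"]
      by simp
    then show ?case
      using insert by simp
  qed
  moreover have "hybrid UNIV = T\<^sub>1"
    by (simp add: hybrid_def)
  ultimately show ?thesis
    by metis
qed

theorem theorem6:
  fixes S :: "(real^'k) set"
    and P :: "real^'k \<Rightarrow> ('n::finite \<Rightarrow> 'u::finite) \<Rightarrow> real^'k \<Rightarrow> real"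
    and \<rho> :: "real^'k \<Rightarrow> real"
    and \<gamma> :: real
    and C :: "(real^'d) set"
    and W :: "real^'k^'d"
    and f :: "('n \<Rightarrow> real^'d) \<Rightarrow> real^'d"
    and L :: "'n \<Rightarrow> real"
    and Tx Ty :: "'n \<Rightarrow> real^'d"
  assumes "finite S" and "S \<noteq> {}"
    and "\<forall>s\<in>S. \<forall>j. 0 \<le> s $ j \<and> s $ j \<le> 1"
    and "\<forall>s\<in>S. \<forall>u. \<forall>s'\<in>S. 0 \<le> P s u s'"
    and "\<forall>s\<in>S. \<forall>u. (\<Sum>s'\<in>S. P s u s') = 1"
    and "\<forall>s\<in>S. 0 \<le> \<rho> s" and "(\<Sum>s\<in>S. \<rho> s) = 1"
    and "0 < \<gamma>" and "\<gamma> < 1"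
    and "C \<subseteq> prob_simplex"
    and "\<forall>T. (\<forall>j. T j \<in> C) \<longrightarrow> (\<forall>i. \<forall>c\<in>C.
           infnorm (f (T(i := c)) - f T) \<le> L i * infnorm (c - T i))"
    and "\<forall>i. Tx i \<in> C" and "\<forall>i. Ty i \<in> C"
  shows "\<bar>opt_value (team_reward f W Tx) P S \<gamma> \<rho> - opt_value (team_reward f W Ty) P S \<gamma> \<rho>\<bar>
         \<le> (Max ((\<lambda>s. l1norm (W *v s)) ` S) * (\<Sum>i\<in>UNIV. L i * infnorm (Tx i - Ty i)))
            / (\<gamma> * (1 - \<gamma>))"
proof -
  interpret finite_mdp S P \<gamma>
    using assms(1,4,5,8,9) by unfold_locales auto
  define s_max where "s_max = Max ((\<lambda>s. l1norm (W *v s)) ` S)"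
  define D where "D = (\<Sum>i\<in>UNIV. L i * infnorm (Tx i - Ty i))"
  have s_max_ge: "l1norm (W *v s) \<le> s_max" if "s \<in> S" for s
    using assms(1) that by (simp add: s_max_def)
  then have "0 \<le> s_max"
    using assms(2) l1norm_nonneg by (meson ex_in_conv order_trans)
  have f_diff: "infnorm (f Tx - f Ty) \<le> D"
    unfolding D_def by (rule infnorm_diff_le_sum_Lipschitz[of C f L]) (use assms(11-13) in auto)
  then have "0 \<le> D"
    using infnorm_pos_le order_trans by blast
  have "\<bar>team_reward f W Tx s - team_reward f W Ty s\<bar> \<le> D * s_max" if "s \<in> S" for s
    using abs_team_reward_diff_le[of f W Tx s Ty] f_diff s_max_ge[OF that] \<open>0 \<le> D\<close>
    by (meson l1norm_nonneg mult_mono order_trans)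
  then have "\<bar>opt_value (team_reward f W Tx) P S \<gamma> \<rho> - opt_value (team_reward f W Ty) P S \<gamma> \<rho>\<bar>
      \<le> D * s_max / (1 - \<gamma>)"
    using assms(6,7) by (intro opt_value_diff_le) auto
  also have "\<dots> \<le> D * s_max / (\<gamma> * (1 - \<gamma>))"
    using assms(8,9) \<open>0 \<le> s_max\<close> \<open>0 \<le> D\<close>
    by (intro divide_left_mono) (auto simp: mult_le_cancel_right1)
  finally show ?thesis
    unfolding s_max_def D_def by (simp add: mult.commute)
qed

end
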